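(* Let $F$ be a discrete time regulatory network on $[0,1]^d$ satisfying coordinatewise injectivity. Then for each $i\in\{1,\dots,d\}$ and each integer $t\ge1$, any two distinct members of $\mathcal Q_i^t$ are disjoint.
   Context: $K\in[0,1]^{d\times d}$ with $\sum_iK_{i,j}=1$ for each $j$; $s\in\{-1,0,1\}^{d\times d}$, $T\in[0,1]^{d\times d}$ with $s_{i,j}=0$ iff $K_{i,j}=0$ and $T_{i,j}=0$ iff $K_{i,j}=0$; $a\in[0,1]$; $H(x)=0$ for $x\le0$, $1$ otherwise; $F(x)_j=ax_j+(1-a)\sum_iK_{i,j}H(s_{i,j}(x_i-T_{i,j}))$. Coordinatewise injectivity: for each $j$, with $\mathcal F_j=\{x\mapsto ax+(1-a)\sum_i\epsilon_iK_{i,j}:\epsilon\in\{0,1\}^d\}$, distinct $f,f'\in\mathcal F_j$ have $f([0,1])\cap f'([0,1])=\emptyset$. Base partition: $\mathcal P_i$ is the set of nonempty level sets of $u\mapsto(H(s_{i,k}(u-T_{i,k})))_{k=1}^d$ on $[0,1]$, $\mathcal P=\{\prod_iI_i:I_i\in\mathcal P_i\}$; $\mathcal P^1=\mathcal P$, $\mathcal P^{t+1}=\{F^{-1}(\mathbf I)\cap\mathbf J\ne\emptyset:\mathbf I\in\mathcal P^t,\mathbf J\in\mathcal P\}$. Set $\mathcal Q^t=\{F^{t-1}(\mathbf I):\mathbf I\in\mathcal P^t\}$ and $\mathcal Q_i^t=\{\Pi_i\mathbf J:\mathbf J\in\mathcal Q^t\}$, where $\Pi_i$ is the projection onto the $i$-th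 coordinate. *)

theory Defs
  imports Complex_Main "HOL-Library.FuncSet"
begin

text \<open>Coordinates are indexed by a finite type 'n (so d = CARD('n)); points of [0,1]^d
are functions 'n \<Rightarrow> real with all values in [0,1].\<close>

definition heav :: "real \<Rightarrow> real" where
  "heav x = (if x \<le> 0 then 0 else 1)"

definition cube :: "('n::finite \<Rightarrow> real) set" where
  "cube = {x. \<forall>i. x i \<in> {0..1}}"

definition netF :: "('n::finite \<Rightarrow> 'n \<Rightarrow> real) \<Rightarrow> ('n \<Rightarrow> 'n \<Rightarrow> real) \<Rightarrow>
    ('n \<Rightarrow> 'n \<Rightarrow> real) \<Rightarrow> real \<Rightarrow> ('n \<Rightarrow> real) \<Rightarrow> ('n \<Rightarrow> real)" where
  "netF K s T a x = (\<lambda>j. a * x j + (1 - a) * (\<Sum>i\<in>UNIV. K i j * heav (s i j * (x i - T i j))))"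

definition regulatory_network ::
  "('n::finite \<Rightarrow> 'n \<Rightarrow> real) \<Rightarrow> ('n \<Rightarrow> 'n \<Rightarrow> real) \<Rightarrow> ('n \<Rightarrow> 'n \<Rightarrow> real) \<Rightarrow> real \<Rightarrow> bool" where
  "regulatory_network K s T a \<longleftrightarrow>
     (\<forall>i j. K i j \<in> {0..1}) \<and> (\<forall>j. (\<Sum>i\<in>UNIV. K i j) = 1) \<and>
     (\<forall>i j. s i j \<in> {-1, 0, 1}) \<and> (\<forall>i j. T i j \<in> {0..1}) \<and>
     (\<forall>i j. s i j = 0 \<longleftrightarrow> K i j = 0) \<and> (\<forall>i j. T i j = 0 \<longleftrightarrow> K i j = 0) \<and>
     a \<in> {0..1}"

definition coordF :: "('n::finite \<Rightarrow> 'n \<Rightarrow> real) \<Rightarrow> real \<Rightarrow> 'n \<Rightarrow> ('n \<Rightarrow> real) \<Rightarrow> real \<Rightarrow> real" where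
  "coordF K a j \<epsilon> = (\<lambda>x. a * x + (1 - a) * (\<Sum>i\<in>UNIV. \<epsilon> i * K i j))"

definition coordinatewise_injective :: "('n::finite \<Rightarrow> 'n \<Rightarrow> real) \<Rightarrow> real \<Rightarrow> bool" where
  "coordinatewise_injective K a \<longleftrightarrow>
     (\<forall>j \<epsilon> \<epsilon>'. (\<forall>i. \<epsilon> i \<in> {0, 1}) \<longrightarrow> (\<forall>i. \<epsilon>' i \<in> {0, 1}) \<longrightarrow>
        coordF K a j \<epsilon> \<noteq> coordF K a j \<epsilon>' \<longrightarrow>
        coordF K a j \<epsilon> ` {0..1} \<inter> coordF K a j \<epsilon>' ` {0..1} = {})"

definition base_part_coord :: "('n::finite \<Rightarrow> 'n \<Rightarrow> real) \<Rightarrow> ('n \<Rightarrow> 'n \<Rightarrow> real) \<Rightarrow> 'n \<Rightarrow> real set set" where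
  "base_part_coord s T i =
     {L. \<exists>v\<in>{0..1}. L = {u\<in>{0..1}. (\<lambda>k. heav (s i k * (u - T i k))) = (\<lambda>k. heav (s i k * (v - T i k)))}}"

definition base_part :: "('n::finite \<Rightarrow> 'n \<Rightarrow> real) \<Rightarrow> ('n \<Rightarrow> 'n \<Rightarrow> real) \<Rightarrow> ('n \<Rightarrow> real) set set" where
  "base_part s T = {Pi UNIV I | I. \<forall>i. I i \<in> base_part_coord s T i}"

text \<open>partP K s T a t = \<P>^t for t \<ge> 1 (the value at t = 0 is irrelevant).\<close>
fun partP :: "('n::finite \<Rightarrow> 'n \<Rightarrow> real) \<Rightarrow> ('n \<Rightarrow> 'n \<Rightarrow> real) \<Rightarrow> ('n \<Rightarrow> 'n \<Rightarrow> real) \<Rightarrow> real \<Rightarrow>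
    nat \<Rightarrow> ('n \<Rightarrow> real) set set" where
  "partP K s T a 0 = {}"
| "partP K s T a (Suc 0) = base_part s T"
| "partP K s T a (Suc (Suc n)) =
     {netF K s T a -` I \<inter> J | I J. I \<in> partP K s T a (Suc n) \<and> J \<in> base_part s T
        \<and> netF K s T a -` I \<inter> J \<noteq> {}}"

definition partQ :: "('n::finite \<Rightarrow> 'n \<Rightarrow> real) \<Rightarrow> ('n \<Rightarrow> 'n \<Rightarrow> real) \<Rightarrow> ('n \<Rightarrow> 'n \<Rightarrow> real) \<Rightarrow> real \<Rightarrow>
    nat \<Rightarrow> ('n \<Rightarrow> real) set set" where
  "partQ K s T a t = {(netF K s T a ^^ (t - 1)) ` I | I. I \<in> partP K s T a t}"

definition partQ_coord :: "('n::finite \<Rightarrow> 'n \<Rightarrow> real) \<Rightarrow> ('n \<Rightarrow> 'n \<Rightarrow> real) \<Rightarrow> ('n \<Rightarrow> 'n \<Rightarrow> real) \<Rightarrow> real \<Rightarrow>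
    nat \<Rightarrow> 'n \<Rightarrow> real set set" where
  "partQ_coord K s T a t i = {(\<lambda>x. x i) ` J | J. J \<in> partQ K s T a t}"

end

theory Submission
  imports Defs
begin

text \<open>Every \<open>Q \<in> \<Q>\<^sup>t\<^sup>+\<^sup>1\<close> has the form \<open>F(Q') \<inter> J\<close> with \<open>Q' \<in> \<Q>\<^sup>t\<close> and
  \<open>J \<in> \<P>\<close>. Since \<open>Q'\<close> lies in a single base cell, on which \<open>F\<close> acts coordinatewise
  by affine maps \<open>\<phi>\<^sub>j(x) = a x + (1 - a) \<Sum>\<^sub>k \<epsilon>\<^sub>k K\<^sub>k\<^sub>,\<^sub>j\<close>, all members of \<open>\<Q>\<^sup>t\<close> are
  products and \<open>\<Pi>\<^sub>i Q = \<phi>\<^sub>i(\<Pi>\<^sub>i Q') \<inter> J\<^sub>i\<close>. If two such projections meet, their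
  factors \<open>J\<^sub>i\<close> meet and are therefore equal, and coordinatewise injectivity forces
  the two maps \<open>\<phi>\<^sub>i\<close> to coincide. Then either \<open>a = 0\<close> and \<open>\<phi>\<^sub>i\<close> is constant, or
  \<open>\<phi>\<^sub>i\<close> is injective, so the projections of the two predecessors meet and are
  equal by induction on \<open>t\<close>.\<close>

lemma base_part_coord_subset: "J \<in> base_part_coord s T i \<Longrightarrow> J \<subseteq> {0..1}"
  unfolding base_part_coord_def by auto

lemma base_part_coord_nonempty: "J \<in> base_part_coord s T i \<Longrightarrow> J \<noteq> {}"
  unfolding base_part_coord_def by auto

lemma base_part_coord_eq_if_meet:
  "J \<in> base_part_coord s T i \<Longrightarrow> J' \<in> base_part_coord s T i \<Longrightarrow> J \<inter> J' \<noteq> {} \<Longrightarrow> J = J'"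
  unfolding base_part_coord_def by auto

lemma base_partE:
  assumes "L \<in> base_part s T"
  obtains Lc where "L = Pi UNIV Lc" "\<And>i. Lc i \<in> base_part_coord s T i"
  using assms unfolding base_part_def by blast

lemma base_part_nonempty: "L \<in> base_part s T \<Longrightarrow> L \<noteq> {}"
  by (metis base_partE base_part_coord_nonempty Pi_eq_empty)

lemma base_part_subset_cube: "L \<in> base_part s T \<Longrightarrow> x \<in> L \<Longrightarrow> x i \<in> {0..1}"
  by (metis base_partE base_part_coord_subset PiE UNIV_I subsetD)

lemma netF_affine_on_base_cell:
  assumes "L \<in> base_part s T"
  obtains e where "\<forall>j k. e j k \<in> {0, 1}"
    and "\<And>x j. x \<in> L \<Longrightarrow> netF K s T a x j = coordF K a j (e j) (x j)"
proof -
  obtain Lc where L: "L = Pi UNIV Lc" and Lc: "\<And>k. Lc k \<in> base_part_coord s T k"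
    using assms by (blast elim: base_partE)
  have "\<forall>k. \<exists>v. Lc k =
      {u\<in>{0..1}. (\<lambda>j. heav (s k j * (u - T k j))) = (\<lambda>j. heav (s k j * (v - T k j)))}"
    using Lc unfolding base_part_coord_def by blast
  then obtain v where v: "\<forall>k. Lc k =
      {u\<in>{0..1}. (\<lambda>j. heav (s k j * (u - T k j))) = (\<lambda>j. heav (s k j * (v k - T k j)))}"
    by (rule choice[THEN exE])
  define e where "e j k = heav (s k j * (v k - T k j))" for j k
  show thesis
  proof
    show "\<forall>j k. e j k \<in> {0, 1}"
      unfolding e_def heav_def by auto
    show "netF K s T a x j = coordF K a j (e j) (x j)" if "x \<in> L" for x j
    proof -
      have "heav (s k j * (x k - T k j)) = e j k" for k
      proof -
        have "x k \<in> Lc k"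
          using \<open>x \<in> L\<close> unfolding L by auto
        then have "(\<lambda>j. heav (s k j * (x k - T k j))) = (\<lambda>j. heav (s k j * (v k - T k j)))"
          using v by blast
        then show ?thesis
          unfolding e_def by (rule fun_cong)
      qed
      then show ?thesis
        unfolding netF_def coordF_def by (simp add: mult.commute)
    qed
  qed
qed

lemma projection_Pi_UNIV:
  assumes "Pi UNIV X \<noteq> {}"
  shows "(\<lambda>x. x i) ` Pi UNIV X = X i"
  using image_projection_PiE[of i UNIV X] assms by (simp add: PiE_UNIV_domain)

lemma image_Pi_UNIV_coordinatewise:
  assumes "\<And>x j. x \<in> Pi UNIV X \<Longrightarrow> G x j = \<phi> j (x j)"
  shows "G ` Pi UNIV X = Pi UNIV (\<lambda>j. \<phi> j ` X j)"
proof
  show "G ` Pi UNIV X \<subseteq> Pi UNIV (\<lambda>j. \<phi> j ` X j)"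
    using assms by auto
  show "Pi UNIV (\<lambda>j. \<phi> j ` X j) \<subseteq> G ` Pi UNIV X"
  proof
    fix y assume "y \<in> Pi UNIV (\<lambda>j. \<phi> j ` X j)"
    then have "\<forall>j. \<exists>u. u \<in> X j \<and> y j = \<phi> j u"
      by auto
    then obtain x where x: "\<forall>j. x j \<in> X j \<and> y j = \<phi> j (x j)"
      by (rule choice[THEN exE])
    then have "G x = y"
      using assms by (intro ext) auto
    with x show "y \<in> G ` Pi UNIV X" by auto
  qed
qed

lemma image_netF_Int_base_cell:
  assumes "L \<in> base_part s T" "Pi UNIV X \<subseteq> L"
  obtains e where "\<forall>j k. e j k \<in> {0, 1}"
    and "netF K s T a ` Pi UNIV X \<inter> Pi UNIV Y = Pi UNIV (\<lambda>j. coordF K a j (e j) ` X j \<inter> Y j)"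
proof -
  obtain e where e01: "\<forall>j k. e j k \<in> {0, 1}"
    and e: "\<And>x j. x \<in> L \<Longrightarrow> netF K s T a x j = coordF K a j (e j) (x j)"
    using netF_affine_on_base_cell[OF assms(1)] by blast
  have "netF K s T a ` Pi UNIV X = Pi UNIV (\<lambda>j. coordF K a j (e j) ` X j)"
    using e assms(2) by (intro image_Pi_UNIV_coordinatewise) blast
  then show thesis
    using that[OF e01] by (simp add: Pi_Int)
qed

lemma partP_nonempty:
  assumes "I \<in> partP K s T a (Suc n)"
  shows "I \<noteq> {}"
proof (cases n)
  case 0
  then show ?thesis
    using assms base_part_nonempty by simp
next
  case (Suc m)
  then show ?thesis
    using assms unfolding Suc partP.simps(3)[of K s T a m] by blast
qed

text \<open>\<open>partP\<close> imposes the new base cell at time 0; here the recursion is read from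
  the other end, with the new cell imposed at the last time.\<close>
lemma partP_Suc_SucE:
  assumes "I \<in> partP K s T a (Suc (Suc n))"
  obtains C J where "C \<in> partP K s T a (Suc n)" "J \<in> base_part s T"
    and "I = C \<inter> (netF K s T a ^^ Suc n) -` J"
  using assms
proof (induction n arbitrary: I thesis)
  case 0
  obtain I' J where "I = netF K s T a -` I' \<inter> J" "I' \<in> base_part s T" "J \<in> base_part s T"
    using 0(2) by auto
  then show ?case
    by (intro 0(1)[of J I']) auto
next
  case (Suc n)
  let ?F = "netF K s T a"
  obtain I' J where I: "I = ?F -` I' \<inter> J" and I': "I' \<in> partP K s T a (Suc (Suc n))"
    and J: "J \<in> base_part s T" and "I \<noteq> {}"
    using Suc.prems(2) unfolding partP.simps(3)[of K s T a "Suc n"] by blast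
  obtain C J' where C: "C \<in> partP K s T a (Suc n)" and J': "J' \<in> base_part s T"
    and I'_eq: "I' = C \<inter> (?F ^^ Suc n) -` J'"
    using Suc.IH[OF _ I'] by blast
  have I_eq: "I = (?F -` C \<inter> J) \<inter> (?F ^^ Suc (Suc n)) -` J'"
    unfolding I I'_eq by (auto simp: funpow_swap1)
  have "?F -` C \<inter> J \<in> partP K s T a (Suc (Suc n))"
    unfolding partP.simps(3)[of K s T a n] using C J \<open>I \<noteq> {}\<close> I_eq by blast
  then show ?case
    using Suc.prems(1) J' I_eq by blast
qed

lemma partQ_Suc_0: "partQ K s T a (Suc 0) = base_part s T"
  unfolding partQ_def by auto

lemma partQ_nonempty: "A \<in> partQ K s T a (Suc n) \<Longrightarrow> A \<noteq> {}"
  unfolding partQ_def using partP_nonempty by fastforce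

lemma partQ_Suc_SucE:
  assumes "A \<in> partQ K s T a (Suc (Suc n))"
  obtains Q J where "Q \<in> partQ K s T a (Suc n)" "J \<in> base_part s T"
    and "A = netF K s T a ` Q \<inter> J"
proof -
  let ?F = "netF K s T a"
  obtain I where A: "A = (?F ^^ Suc n) ` I" and I: "I \<in> partP K s T a (Suc (Suc n))"
    using assms unfolding partQ_def by (auto simp del: partP.simps)
  obtain C J where C: "C \<in> partP K s T a (Suc n)" and J: "J \<in> base_part s T"
    and I_eq: "I = C \<inter> (?F ^^ Suc n) -` J"
    using partP_Suc_SucE[OF I] by blast
  have "A = ?F ` ((?F ^^ n) ` C) \<inter> J"
    unfolding A I_eq by (auto simp: image_comp funpow_swap1)
  moreover have "(?F ^^ n) ` C \<in> partQ K s T a (Suc n)"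
    using C unfolding partQ_def by auto
  ultimately show thesis
    using J that by blast
qed

lemma partQ_subset_base_cell: "A \<in> partQ K s T a (Suc n) \<Longrightarrow> \<exists>L\<in>base_part s T. A \<subseteq> L"
  by (cases n) (auto simp: partQ_Suc_0 elim!: partQ_Suc_SucE)

lemma partQ_product: "A \<in> partQ K s T a (Suc n) \<Longrightarrow> \<exists>X. A = Pi UNIV X"
proof (induction n arbitrary: A)
  case 0
  then show ?case
    unfolding partQ_Suc_0 base_part_def by blast
next
  case (Suc n)
  obtain Q J where Q: "Q \<in> partQ K s T a (Suc n)" and J: "J \<in> base_part s T"
    and A: "A = netF K s T a ` Q \<inter> J"
    using Suc.prems by (rule partQ_Suc_SucE)
  obtain X where QX: "Q = Pi UNIV X"
    using Suc.IH[OF Q] by blast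
  obtain Y where JY: "J = Pi UNIV Y"
    using J by (blast elim: base_partE)
  obtain L where "L \<in> base_part s T" "Q \<subseteq> L"
    using partQ_subset_base_cell[OF Q] by blast
  then obtain e where "\<forall>j k. e j k \<in> {0, 1}"
    and "A = Pi UNIV (\<lambda>j. coordF K a j (e j) ` X j \<inter> Y j)"
    unfolding A QX JY by (rule image_netF_Int_base_cell)
  then show ?case
    by blast
qed

lemma coordinate_partQ_subset: "A \<in> partQ K s T a (Suc n) \<Longrightarrow> (\<lambda>x. x i) ` A \<subseteq> {0..1}"
  using partQ_subset_base_cell base_part_subset_cube by blast

lemma coordinate_partQ_Suc_SucE:
  assumes "A \<in> partQ K s T a (Suc (Suc n))"
  obtains Q \<epsilon> J where "Q \<in> partQ K s T a (Suc n)" "\<forall>k. \<epsilon> k \<in> {0, 1}"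
    and "J \<in> base_part_coord s T i"
    and "(\<lambda>x. x i) ` A = coordF K a i \<epsilon> ` ((\<lambda>x. x i) ` Q) \<inter> J"
proof -
  obtain Q J where Q: "Q \<in> partQ K s T a (Suc n)" and J: "J \<in> base_part s T"
    and A: "A = netF K s T a ` Q \<inter> J"
    using assms by (rule partQ_Suc_SucE)
  obtain X where QX: "Q = Pi UNIV X"
    using partQ_product[OF Q] by blast
  obtain Y where JY: "J = Pi UNIV Y" and Y: "\<And>j. Y j \<in> base_part_coord s T j"
    using J by (blast elim: base_partE)
  obtain L where "L \<in> base_part s T" "Q \<subseteq> L"
    using partQ_subset_base_cell[OF Q] by blast
  then obtain e where e01: "\<forall>j k. e j k \<in> {0, 1}"
    and AXY: "A = Pi UNIV (\<lambda>j. coordF K a j (e j) ` X j \<inter> Y j)"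
    unfolding A QX JY by (rule image_netF_Int_base_cell)
  have "(\<lambda>x. x i) ` A = coordF K a i (e i) ` X i \<inter> Y i"
    using partQ_nonempty[OF assms] unfolding AXY by (rule projection_Pi_UNIV)
  moreover have "(\<lambda>x. x i) ` Q = X i"
    using partQ_nonempty[OF Q] unfolding QX by (rule projection_Pi_UNIV)
  ultimately show thesis
    using e01 Y by (intro that[OF Q]) auto
qed

lemma coordF_images_eq_if_meet:
  assumes inj: "coordinatewise_injective K a"
    and \<epsilon>: "\<forall>k. \<epsilon> k \<in> {0, 1}" and \<epsilon>': "\<forall>k. \<epsilon>' k \<in> {0, 1}"
    and U: "U \<subseteq> {0..1}" "U \<noteq> {}" and U': "U' \<subseteq> {0..1}" "U' \<noteq> {}"
    and U_eq: "U \<inter> U' \<noteq> {} \<Longrightarrow> U = U'"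
    and meet: "coordF K a j \<epsilon> ` U \<inter> coordF K a j \<epsilon>' ` U' \<noteq> {}"
  shows "coordF K a j \<epsilon> ` U = coordF K a j \<epsilon>' ` U'"
proof -
  have same_map: "coordF K a j \<epsilon> = coordF K a j \<epsilon>'"
    using inj \<epsilon> \<epsilon>' U(1) U'(1) meet unfolding coordinatewise_injective_def by blast
  show ?thesis
  proof (cases "a = 0")
    case True
    then show ?thesis
      using U(2) U'(2) unfolding same_map by (auto simp: coordF_def)
  next
    case False
    then have "inj (coordF K a j \<epsilon>)"
      by (auto intro: injI simp: coordF_def)
    with meet have "U \<inter> U' \<noteq> {}"
      unfolding same_map by (auto dest: injD)
    then show ?thesis
      using U_eq same_map by simp
  qed
qed

lemma coordinate_partQ_eq_if_meet:
  assumes "coordinatewise_injective K a"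
    and "A \<in> partQ K s T a (Suc n)" "A' \<in> partQ K s T a (Suc n)"
    and "(\<lambda>x. x i) ` A \<inter> (\<lambda>x. x i) ` A' \<noteq> {}"
  shows "(\<lambda>x. x i) ` A = (\<lambda>x. x i) ` A'"
  using assms(2-)
proof (induction n arbitrary: A A')
  case 0
  then have A: "A \<in> base_part s T" and A': "A' \<in> base_part s T"
    by (simp_all add: partQ_Suc_0)
  obtain L where L: "A = Pi UNIV L" "\<And>j. L j \<in> base_part_coord s T j"
    using A by (blast elim: base_partE)
  obtain L' where L': "A' = Pi UNIV L'" "\<And>j. L' j \<in> base_part_coord s T j"
    using A' by (blast elim: base_partE)
  have "(\<lambda>x. x i) ` A = L i"
    using base_part_nonempty[OF A] unfolding L(1) by (rule projection_Pi_UNIV)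
  moreover have "(\<lambda>x. x i) ` A' = L' i"
    using base_part_nonempty[OF A'] unfolding L'(1) by (rule projection_Pi_UNIV)
  ultimately show ?case
    using 0(3) base_part_coord_eq_if_meet[OF L(2) L'(2)] by simp
next
  case (Suc n)
  obtain Q \<epsilon> J where Q: "Q \<in> partQ K s T a (Suc n)" and \<epsilon>: "\<forall>k. \<epsilon> k \<in> {0, 1}"
    and J: "J \<in> base_part_coord s T i"
    and A: "(\<lambda>x. x i) ` A = coordF K a i \<epsilon> ` ((\<lambda>x. x i) ` Q) \<inter> J"
    using Suc.prems(1) by (rule coordinate_partQ_Suc_SucE[where i = i])
  obtain Q' \<epsilon>' J' where Q': "Q' \<in> partQ K s T a (Suc n)" and \<epsilon>': "\<forall>k. \<epsilon>' k \<in> {0, 1}"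
    and J': "J' \<in> base_part_coord s T i"
    and A': "(\<lambda>x. x i) ` A' = coordF K a i \<epsilon>' ` ((\<lambda>x. x i) ` Q') \<inter> J'"
    using Suc.prems(2) by (rule coordinate_partQ_Suc_SucE[where i = i])
  have "J \<inter> J' \<noteq> {}"
    using Suc.prems(3) unfolding A A' by blast
  with J J' have "J = J'"
    by (rule base_part_coord_eq_if_meet)
  moreover have "coordF K a i \<epsilon> ` ((\<lambda>x. x i) ` Q) = coordF K a i \<epsilon>' ` ((\<lambda>x. x i) ` Q')"
    using Suc.prems(3) unfolding A A'
    by (intro coordF_images_eq_if_meet[OF assms(1) \<epsilon> \<epsilon>'] Suc.IH[OF Q Q'])
      (auto simp: coordinate_partQ_subset[OF Q] coordinate_partQ_subset[OF Q']
        partQ_nonempty[OF Q] partQ_nonempty[OF Q'])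
  ultimately show ?case
    unfolding A A' by simp
qed

theorem mainTheorem6:
  fixes K s T :: "'n::finite \<Rightarrow> 'n \<Rightarrow> real" and a :: real and i :: 'n and t :: nat
  assumes "regulatory_network K s T a"
    and "coordinatewise_injective K a"
    and "t \<ge> 1"
    and "A \<in> partQ_coord K s T a t i" and "B \<in> partQ_coord K s T a t i" and "A \<noteq> B"
  shows "A \<inter> B = {}"
proof -
  obtain n where t: "t = Suc n"
    using \<open>t \<ge> 1\<close> by (cases t) auto
  obtain Q Q' where "Q \<in> partQ K s T a t" "A = (\<lambda>x. x i) ` Q"
    and "Q' \<in> partQ K s T a t" "B = (\<lambda>x. x i) ` Q'"
    using assms(4,5) unfolding partQ_coord_def by blast
  then show ?thesis
    using coordinate_partQ_eq_if_meet[OF assms(2)] \<open>A \<noteq> B\<close> unfolding t by metis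
qed

end
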